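(* Let $IS\in\{\Box,\blacksquare\}^2$ and let $\tau$ be a correct compositional translation from $\mathrm{SYNCSIMPLE}$ into $\mathrm{LOCKSIMPLE}_{2,IS}$. Then $\tau$ does not have blocking type $(P_1P_1,P_1)$, nor $(P_1,P_1P_1)$, nor $(P_1,P_1)$.
   Context: $\mathrm{SYNCSIMPLE}$: subprocesses $\mathcal{U} ::= \checkmark \mid 0 \mid\, !\mathcal{U} \mid\, ?\mathcal{U}$; processes are finite parallel compositions ($\mid$ associative, commutative, $0$ a unit). Reduction: $!\mathcal{U}_1\mid ?\mathcal{U}_2\mid \mathcal{P}\to \mathcal{U}_1\mid\mathcal{U}_2\mid\mathcal{P}$. Successful: of form $\checkmark\mid\mathcal{P}$; may-convergent: reduces to a successful process; must-convergent: every reachable process is may-convergent. $\mathrm{LOCKSIMPLE}_{k,IS}$ ($IS\in\{\Box,\blacksquare\}^k$, $\Box$ empty, $\blacksquare$ full): subprocesses are words over $\{P_1,T_1,\dots,P_k,T_k\}$ followed by $0$ or $\checkmark$; states $(\mathcal{P},C)$ reduce by $(P_i\mathcal{U}\mid\mathcal{P},C)\to(\mathcal{U}\mid\mathcal{P},C[C_i:=\blacksquare])$ only if $C_i=\Box$, and $(T_i\mathcal{U}\mid\mathcal{P},C)\to(\mathcal{U}\mid\mathcal{P},C[C_i:=\Box])$ always. Success = process contains $\checkmark$; a process $\mathcal{P}$ is may/must-convergent iff the state $(\mathcal{P},IS)$ is. A compositional translation $\tau$ is given by words $\tau(!),\tau(?)$ with $\tau(0)=0$, $\tau(\checkmark)=\checkmark$,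 $\tau(!\mathcal{U})=\tau(!)\tau(\mathcal{U})$, $\tau(?\mathcal{U})=\tau(?)\tau(\mathcal{U})$, $\tau$ commuting with $\mid$; correct = preserves and reflects may- and must-convergence. Blocking type: for a word $S$, run $S$ as a single subprocess from $IS$; if it gets stuck at an occurrence of $P_i$, that occurrence ends the blocking prefix; if it is the first symbol from $\{P_i,T_i\}$ in $S$ the blocking type is $P_i$, otherwise the blocking prefix has form $R_1P_iR_2P_i$ with $R_2$ containing no $P_i,T_i$, and the blocking type is $P_iP_i$. $\tau$ has blocking type $(W_1,W_2)$ if $\tau(!)$ has type $W_1$ and $\tau(?)$ type $W_2$. *)

theory Defs
  imports "HOL-Library.Multiset"
begin

datatype sub = Check | Zero | Snd sub | Rcv sub

type_synonym sproc = "sub multiset"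

inductive sync_step :: "sproc \<Rightarrow> sproc \<Rightarrow> bool" where
  "sync_step ({#Snd u1, Rcv u2#} + P) ({#u1, u2#} + P)"

definition sync_successful :: "sproc \<Rightarrow> bool" where
  "sync_successful P \<longleftrightarrow> Check \<in># P"

definition sync_may :: "sproc \<Rightarrow> bool" where
  "sync_may P \<longleftrightarrow> (\<exists>Q. sync_step\<^sup>*\<^sup>* P Q \<and> sync_successful Q)"

definition sync_must :: "sproc \<Rightarrow> bool" where
  "sync_must P \<longleftrightarrow> (\<forall>Q. sync_step\<^sup>*\<^sup>* P Q \<longrightarrow> sync_may Q)"

datatype lsym = P nat | T nat

text \<open>A subprocess is a word followed by 0 (False) or the success symbol (True).
  Lock contents: True = full, False = empty.\<close>
type_synonym lsub = "lsym list \<times> bool"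
type_synonym lproc = "lsub multiset"
type_synonym locks = "nat \<Rightarrow> bool"

inductive lock_step :: "lproc \<times> locks \<Rightarrow> lproc \<times> locks \<Rightarrow> bool" where
  lock_P: "\<not> C i \<Longrightarrow> lock_step ({#(P i # w, e)#} + Q, C) ({#(w, e)#} + Q, C(i := True))"
| lock_T: "lock_step ({#(T i # w, e)#} + Q, C) ({#(w, e)#} + Q, C(i := False))"

definition lock_successful :: "lproc \<times> locks \<Rightarrow> bool" where
  "lock_successful S \<longleftrightarrow> ([], True) \<in># fst S"

definition lock_may :: "lproc \<times> locks \<Rightarrow> bool" where
  "lock_may S \<longleftrightarrow> (\<exists>S'. lock_step\<^sup>*\<^sup>* S S' \<and> lock_successful S')"

definition lock_must :: "lproc \<times> locks \<Rightarrow> bool" where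
  "lock_must S \<longleftrightarrow> (\<forall>S'. lock_step\<^sup>*\<^sup>* S S' \<longrightarrow> lock_may S')"

fun tr_sub :: "lsym list \<Rightarrow> lsym list \<Rightarrow> sub \<Rightarrow> lsub" where
  "tr_sub ts tr Check = ([], True)"
| "tr_sub ts tr Zero = ([], False)"
| "tr_sub ts tr (Snd u) = (ts @ fst (tr_sub ts tr u), snd (tr_sub ts tr u))"
| "tr_sub ts tr (Rcv u) = (tr @ fst (tr_sub ts tr u), snd (tr_sub ts tr u))"

definition tr_proc :: "lsym list \<Rightarrow> lsym list \<Rightarrow> sproc \<Rightarrow> lproc" where
  "tr_proc ts tr Pr = image_mset (tr_sub ts tr) Pr"

text \<open>Correct translation (given by the words ts = tau(!), tr = tau(?)) into
  LOCKSIMPLE with initial lock state IS.\<close>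
definition correct_translation :: "locks \<Rightarrow> lsym list \<Rightarrow> lsym list \<Rightarrow> bool" where
  "correct_translation IS ts tr \<longleftrightarrow>
     (\<forall>Pr. (sync_may Pr \<longleftrightarrow> lock_may (tr_proc ts tr Pr, IS)) \<and>
           (sync_must Pr \<longleftrightarrow> lock_must (tr_proc ts tr Pr, IS)))"

datatype btype = BP nat | BPP nat

text \<open>Run a word as a single subprocess; returns the position and the lock index
  of the P-occurrence where it gets stuck, if any.\<close>
fun run_stuck :: "locks \<Rightarrow> lsym list \<Rightarrow> (nat \<times> nat) option" where
  "run_stuck C [] = None"
| "run_stuck C (P i # w) = (if C i then Some (0, i)
      else map_option (\<lambda>(n, j). (Suc n, j)) (run_stuck (C(i := True)) w))"
| "run_stuck C (T i # w) = map_option (\<lambda>(n, j). (Suc n, j)) (run_stuck (C(i := False)) w)"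

definition blocking_type :: "locks \<Rightarrow> lsym list \<Rightarrow> btype option" where
  "blocking_type IS S = (case run_stuck IS S of
      None \<Rightarrow> None
    | Some (n, i) \<Rightarrow> Some (if (\<forall>m<n. S ! m \<noteq> P i \<and> S ! m \<noteq> T i) then BP i else BPP i))"

end

theory Submission
  imports Defs
begin

text \<open>The SYNCSIMPLE process \<open>!\<checkmark> | ?0\<close> is must-convergent, and it translates to the two
  subprocesses \<open>\<tau>(!)\<checkmark>\<close> and \<open>\<tau>(?)0\<close>. Suppose one of the two words has blocking type \<open>P\<^sub>1\<close>,
  i.e. it reaches a \<open>P\<^sub>1\<close> without touching lock 1 before, and the other one gets stuck at
  some \<open>P\<^sub>1\<close> when run alone. Running the latter alone up to that point leaves lock 1 full
  while both subprocesses wait in front of a \<open>P\<^sub>1\<close> with no \<open>T\<^sub>1\<close> on the way; then lock 1 stays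
  full forever and success is unreachable, so the translation is not must-convergent.
  Neither the second lock nor the alphabet restriction plays any role.\<close>

lemma sync_step_keeps_Check: "sync_step Q Q' \<Longrightarrow> Check \<in># Q \<Longrightarrow> Check \<in># Q'"
  by (induction rule: sync_step.induct) auto

lemma sync_step_from_pair: "sync_step {#Snd a, Rcv b#} Q \<Longrightarrow> Q = {#a, b#}"
proof (induction "{#Snd a, Rcv b#}" Q rule: sync_step.induct)
  case (1 u1 u2 R)
  then have "R = {#}"
    by (metis size_eq_0_iff_empty size_union size_add_mset size_empty add_cancel_right_right)
  with 1 have pair: "{#Snd u1, Rcv u2#} = {#Snd a, Rcv b#}"
    by simp
  have "Snd u1 \<in># {#Snd a, Rcv b#}" "Rcv u2 \<in># {#Snd a, Rcv b#}"
    unfolding pair[symmetric] by simp_all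
  with \<open>R = {#}\<close> show ?case
    by simp
qed

lemma sync_must_Snd_Check_Rcv: "sync_must {#Snd Check, Rcv u#}"
proof -
  have first_step: "sync_step {#Snd Check, Rcv u#} {#Check, u#}"
    using sync_step.intros[of Check u "{#}"] by simp
  have reach: "Q = {#Snd Check, Rcv u#} \<or> Check \<in># Q"
    if "sync_step\<^sup>*\<^sup>* {#Snd Check, Rcv u#} Q" for Q
    using that
  proof (induction rule: rtranclp_induct)
    case (step Q Q')
    from step.IH show ?case
    proof
      assume "Q = {#Snd Check, Rcv u#}"
      with step.hyps(2) have "Q' = {#Check, u#}"
        using sync_step_from_pair by blast
      then show ?case
        by simp
    next
      assume "Check \<in># Q"
      with step.hyps(2) show ?case
        using sync_step_keeps_Check by blast
    qed
  qed simp
  have "sync_may {#Snd Check, Rcv u#}"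
    unfolding sync_may_def sync_successful_def using first_step by auto
  moreover have "sync_may Q" if "Check \<in># Q" for Q
    unfolding sync_may_def sync_successful_def using that by blast
  ultimately show ?thesis
    unfolding sync_must_def using reach by blast
qed

lemma lock_step_add_mset_right:
  assumes "lock_step (M, C) (M', C')"
  shows "lock_step (M + Q, C) (M' + Q, C')"
  using assms
proof (cases rule: lock_step.cases)
  case (lock_P i w e R)
  then show ?thesis
    using lock_step.lock_P[of C i w e "R + Q"] by (simp add: add.assoc)
next
  case (lock_T i w e R)
  then show ?thesis
    using lock_step.lock_T[of i w e "R + Q" C] by (simp add: add.assoc)
qed

lemma lock_steps_add_mset_right:
  "lock_step\<^sup>*\<^sup>* (M, C) (M', C') \<Longrightarrow> lock_step\<^sup>*\<^sup>* (M + Q, C) (M' + Q, C')"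
  by (induction rule: rtranclp_induct2)
     (auto intro: rtranclp.rtrancl_into_rtrancl lock_step_add_mset_right)

definition blocked_on :: "nat \<Rightarrow> lsym list \<Rightarrow> bool" where
  "blocked_on i w \<longleftrightarrow> (\<exists>u v. w = u @ P i # v \<and> P i \<notin> set u \<and> T i \<notin> set u)"

lemma blocked_on_Cons:
  assumes "blocked_on i (x # w)" and "x \<noteq> P i"
  shows "blocked_on i w \<and> x \<noteq> T i"
proof -
  from assms(1) obtain u v where "x # w = u @ P i # v" "P i \<notin> set u" "T i \<notin> set u"
    unfolding blocked_on_def by blast
  with assms(2) show ?thesis
    unfolding blocked_on_def by (cases u) auto
qed

lemma lock_step_blocked_on:
  assumes "lock_step (M, C) (M', C')" and "C i" and "\<forall>s\<in>#M. blocked_on i (fst s)"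
  shows "C' i \<and> (\<forall>s\<in>#M'. blocked_on i (fst s))"
  using assms(1)
proof (cases rule: lock_step.cases)
  case (lock_P k w e Q)
  with assms(2) have "k \<noteq> i"
    by auto
  with lock_P assms(3) have "blocked_on i w"
    using blocked_on_Cons[of i "P k" w] by auto
  with lock_P assms show ?thesis
    by fastforce
next
  case (lock_T k w e Q)
  with assms(3) have "blocked_on i w \<and> k \<noteq> i"
    using blocked_on_Cons[of i "T k" w] by auto
  with lock_T assms show ?thesis
    by fastforce
qed

lemma blocked_on_not_lock_may:
  assumes "C i" and "\<forall>s\<in>#M. blocked_on i (fst s)"
  shows "\<not> lock_may (M, C)"
proof
  assume "lock_may (M, C)"
  then obtain M' C' where steps: "lock_step\<^sup>*\<^sup>* (M, C) (M', C')" and "([], True) \<in># M'"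
    unfolding lock_may_def lock_successful_def by auto
  have "C' i \<and> (\<forall>s\<in>#M'. blocked_on i (fst s))"
    using steps assms
    by (induction rule: rtranclp_induct2) (auto dest: lock_step_blocked_on)
  with \<open>([], True) \<in># M'\<close> show False
    unfolding blocked_on_def by fastforce
qed

lemma run_stuck_SomeD:
  "run_stuck C w = Some (n, i) \<Longrightarrow>
     \<exists>C'. C' i \<and> n < length w \<and> w ! n = P i \<and> lock_step\<^sup>*\<^sup>* ({#(w, e)#}, C) ({#(drop n w, e)#}, C')"
proof (induction C w arbitrary: n rule: run_stuck.induct)
  case (2 C k w)
  show ?case
  proof (cases "C k")
    case True
    with "2.prems" have "n = 0" "i = k"
      by auto
    with True show ?thesis
      by auto
  next
    case False
    with "2.prems" obtain n' where n: "n = Suc n'" "run_stuck (C(k := True)) w = Some (n', i)"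
      by (auto split: if_splits)
    have "lock_step ({#(P k # w, e)#}, C) ({#(w, e)#}, C(k := True))"
      using lock_step.lock_P[of C k w e "{#}"] False by simp
    moreover obtain C' where "C' i" "n' < length w" "w ! n' = P i"
      and "lock_step\<^sup>*\<^sup>* ({#(w, e)#}, C(k := True)) ({#(drop n' w, e)#}, C')"
      using "2.IH"[OF False n(2)] by blast
    ultimately show ?thesis
      using n(1) converse_rtranclp_into_rtranclp by fastforce
  qed
next
  case (3 C k w)
  then obtain n' where n: "n = Suc n'" "run_stuck (C(k := False)) w = Some (n', i)"
    by auto
  have "lock_step ({#(T k # w, e)#}, C) ({#(w, e)#}, C(k := False))"
    using lock_step.lock_T[of k w e "{#}" C] by simp
  moreover obtain C' where "C' i" "n' < length w" "w ! n' = P i"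
    and "lock_step\<^sup>*\<^sup>* ({#(w, e)#}, C(k := False)) ({#(drop n' w, e)#}, C')"
    using "3.IH"[OF n(2)] by blast
  ultimately show ?case
    using n(1) converse_rtranclp_into_rtranclp by fastforce
qed simp

lemma not_lock_must_if_blocked_on_and_run_stuck:
  assumes "blocked_on i w1" and "run_stuck C w2 = Some (n, i)"
  shows "\<not> lock_must ({#(w1, e1), (w2, e2)#}, C)"
proof -
  obtain C' where "C' i" "n < length w2" "w2 ! n = P i"
    and "lock_step\<^sup>*\<^sup>* ({#(w2, e2)#}, C) ({#(drop n w2, e2)#}, C')"
    using run_stuck_SomeD[OF assms(2)] by blast
  then have steps: "lock_step\<^sup>*\<^sup>* ({#(w1, e1), (w2, e2)#}, C) ({#(w1, e1), (drop n w2, e2)#}, C')"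
    using lock_steps_add_mset_right[of _ _ _ _ "{#(w1, e1)#}"] by (simp add: add_mset_commute)
  have "drop n w2 = [] @ P i # drop (Suc n) w2"
    using Cons_nth_drop_Suc[OF \<open>n < length w2\<close>] \<open>w2 ! n = P i\<close> by simp
  then have "blocked_on i (drop n w2)"
    unfolding blocked_on_def by (metis empty_iff list.set(1))
  with assms(1) \<open>C' i\<close> have "\<not> lock_may ({#(w1, e1), (drop n w2, e2)#}, C')"
    by (intro blocked_on_not_lock_may) auto
  with steps show ?thesis
    unfolding lock_must_def by blast
qed

lemma blocking_type_run_stuck:
  "blocking_type C w \<in> {Some (BP i), Some (BPP i)} \<Longrightarrow> \<exists>n. run_stuck C w = Some (n, i)"
  by (auto simp: blocking_type_def split: option.splits if_splits)

lemma blocking_type_BP_blocked_on: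
  assumes "blocking_type C w = Some (BP i)"
  shows "blocked_on i w"
proof -
  obtain n where stuck: "run_stuck C w = Some (n, i)"
    and free: "\<forall>m<n. w ! m \<noteq> P i \<and> w ! m \<noteq> T i"
    using assms by (auto simp: blocking_type_def split: option.splits if_splits)
  obtain C' where "n < length w" "w ! n = P i"
    using run_stuck_SomeD[OF stuck] by blast
  then have "w = take n w @ P i # drop (Suc n) w"
    by (metis append_take_drop_id Cons_nth_drop_Suc)
  moreover have "P i \<notin> set (take n w)" "T i \<notin> set (take n w)"
    using free by (auto simp: in_set_conv_nth)
  ultimately show ?thesis
    unfolding blocked_on_def by blast
qed

theorem proposition5p10:
  fixes IS :: locks and ts tr :: "lsym list"
  assumes "set ts \<subseteq> {P 1, T 1, P 2, T 2}" and "set tr \<subseteq> {P 1, T 1, P 2, T 2}"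
    and "correct_translation IS ts tr"
  shows "\<not> (blocking_type IS ts = Some (BPP 1) \<and> blocking_type IS tr = Some (BP 1))
       \<and> \<not> (blocking_type IS ts = Some (BP 1) \<and> blocking_type IS tr = Some (BPP 1))
       \<and> \<not> (blocking_type IS ts = Some (BP 1) \<and> blocking_type IS tr = Some (BP 1))"
proof -
  have "tr_proc ts tr {#Snd Check, Rcv Zero#} = {#(ts, True), (tr, False)#}"
    by (simp add: tr_proc_def)
  then have must: "lock_must ({#(ts, True), (tr, False)#}, IS)"
    using assms(3) sync_must_Snd_Check_Rcv unfolding correct_translation_def by metis
  have ts_blocked_tr_stuck: False if "blocked_on 1 ts" and "run_stuck IS tr = Some (n, 1)" for n
    using not_lock_must_if_blocked_on_and_run_stuck[OF that] must by blast
  have tr_blocked_ts_stuck: False if "blocked_on 1 tr" and "run_stuck IS ts = Some (n, 1)" for n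
    using not_lock_must_if_blocked_on_and_run_stuck[OF that, of False True] must
    by (simp add: add_mset_commute)
  show ?thesis
  proof (intro conjI notI; elim conjE)
    assume "blocking_type IS ts = Some (BPP 1)" and "blocking_type IS tr = Some (BP 1)"
    then show False
      using tr_blocked_ts_stuck blocking_type_BP_blocked_on blocking_type_run_stuck[of IS ts 1] by auto
  next
    assume "blocking_type IS ts = Some (BP 1)" and "blocking_type IS tr = Some (BPP 1)"
    then show False
      using ts_blocked_tr_stuck blocking_type_BP_blocked_on blocking_type_run_stuck[of IS tr 1] by auto
  next
    assume "blocking_type IS ts = Some (BP 1)" and "blocking_type IS tr = Some (BP 1)"
    then show False
      using ts_blocked_tr_stuck blocking_type_BP_blocked_on blocking_type_run_stuck[of IS tr 1] by auto
  qed
qed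

end
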